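(* Let $d\ge2$, let $\mathcal{F}$ be a finite constraint family, and let $\phi$ be a $\mathrm{SAT}(\mathcal{F})$ formula on variables $x_1,\dots,x_n$. Let $F_d$ be the set of all assignments of weight at most $d$ that violate some constraint of $\phi$. Define $$\phi_d=\bigwedge_{a\in F_d}\mathrm{NAND}(\mathrm{ones}(a)),$$ where $\mathrm{NAND}(\mathrm{ones}(a))$ is the constraint that not all variables in $\mathrm{ones}(a)$ are $1$. Then the following hold. (P1) If $\mathcal{F}$ avoids $\mathrm{NAND}_{d+1}$, then every satisfying assignment of $\phi_d$ is a satisfying assignment of $\phi$. (P2) If $a$ is a $d$-robust satisfying assignment of $\phi$, then $a$ satisfies $\phi_d$.
   Context: A $\mathrm{SAT}(\mathcal{F})$ formula is a conjunction of constraints $f(x_{i_1},\dots,x_{i_r})$ with $f\in\mathcal{F}$ and $i_j\in[n]$ not necessarily distinct. For an assignment $a:[n]\to\{0,1\}$, its weight is $\sum_i a(i)$, and $\mathrm{ones}(a)=\{x_i: a(i)=1\}$. We write $a'\le a$ if $a'(i)\le a(i)$ for all $i$. A weight-$k$ assignment $a$ satisfying $\phi$ is $d$-robust if no assignment $a'\le a$ of weight at most $d$ violates $\phi$. $\mathrm{NAND}_{d+1}(y_1,\dots,y_{d+1})=\overline{y_1\wedge\cdots\wedge y_{d+1}}$. $\mathcal{F}$ avoids $\mathrm{NAND}_{d+1}$ if no $f\in\mathcal{F}$ has it as a restriction. A restriction of $f:\{0,1\}^r\to\{0,1\}$ is obtained by choosing pairwise disjoint, possibly empty, sets $X_1,\dots,X_s,Z_0,Z_1$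 with union $[r]$, and substituting the new argument $x_j$ at the positions in $X_j$, $0$ at the positions in $Z_0$, and $1$ at the positions in $Z_1$. *)

theory Defs
  imports Main
begin

(* A constraint (Boolean function) f : {0,1}^r -> {0,1} is a pair (r, f);
   Booleans encode {0,1} (True = 1); f is only consulted on lists of length r. *)
type_synonym constr = "nat \<times> (bool list \<Rightarrow> bool)"

(* A SAT(F) formula: a list of constraint applications f(x_{i_1},...,x_{i_r}),
   variables x_1..x_n are indexed by 0..n-1. *)
type_synonym formula = "(constr \<times> nat list) list"

definition wf_formula :: "constr set \<Rightarrow> nat \<Rightarrow> formula \<Rightarrow> bool" where
  "wf_formula F n \<phi> = (\<forall>((r, f), idx) \<in> set \<phi>. (r, f) \<in> F \<and> length idx = r \<and> set idx \<subseteq> {..<n})"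

definition assignment :: "nat \<Rightarrow> (nat \<Rightarrow> bool) \<Rightarrow> bool" where
  "assignment n a = (\<forall>i. n \<le> i \<longrightarrow> \<not> a i)"

definition ones :: "nat \<Rightarrow> (nat \<Rightarrow> bool) \<Rightarrow> nat set" where
  "ones n a = {i. i < n \<and> a i}"

definition weight :: "nat \<Rightarrow> (nat \<Rightarrow> bool) \<Rightarrow> nat" where
  "weight n a = card (ones n a)"

definition le_assign :: "(nat \<Rightarrow> bool) \<Rightarrow> (nat \<Rightarrow> bool) \<Rightarrow> bool" where
  "le_assign a' a = (\<forall>i. a' i \<longrightarrow> a i)"

definition sat_constraint :: "(nat \<Rightarrow> bool) \<Rightarrow> constr \<times> nat list \<Rightarrow> bool" where
  "sat_constraint a c = (case c of ((r, f), idx) \<Rightarrow> f (map a idx))"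

definition satisfies :: "(nat \<Rightarrow> bool) \<Rightarrow> formula \<Rightarrow> bool" where
  "satisfies a \<phi> = (\<forall>c \<in> set \<phi>. sat_constraint a c)"

definition robust :: "nat \<Rightarrow> nat \<Rightarrow> formula \<Rightarrow> (nat \<Rightarrow> bool) \<Rightarrow> bool" where
  "robust n d \<phi> a = (satisfies a \<phi> \<and>
     (\<forall>a'. assignment n a' \<and> le_assign a' a \<and> weight n a' \<le> d \<longrightarrow> satisfies a' \<phi>))"

definition Fd :: "nat \<Rightarrow> nat \<Rightarrow> formula \<Rightarrow> (nat \<Rightarrow> bool) set" where
  "Fd n d \<phi> = {a. assignment n a \<and> weight n a \<le> d \<and> \<not> satisfies a \<phi>}"

definition nand_sat :: "(nat \<Rightarrow> bool) \<Rightarrow> nat set \<Rightarrow> bool" where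
  "nand_sat a S = (\<not> (\<forall>i \<in> S. a i))"

(* phi_d = conjunction of NAND(ones(a)) over a in F_d, represented by its set of NAND scopes *)
definition phi_d :: "nat \<Rightarrow> nat \<Rightarrow> formula \<Rightarrow> nat set set" where
  "phi_d n d \<phi> = ones n ` Fd n d \<phi>"

definition satisfies_nands :: "(nat \<Rightarrow> bool) \<Rightarrow> nat set set \<Rightarrow> bool" where
  "satisfies_nands a \<psi> = (\<forall>S \<in> \<psi>. nand_sat a S)"

definition NAND :: "nat \<Rightarrow> constr" where
  "NAND m = (m, \<lambda>ys. \<not> (\<forall>y \<in> set ys. y))"

(* (s,g) is a restriction of (r,f): each position p < r is mapped either to a new
   argument x_j (Inl j, j < s) or to a constant (Inr c); this encodes the pairwise
   disjoint sets X_1..X_s, Z_0, Z_1 covering [r]. *)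
definition is_restriction :: "constr \<Rightarrow> constr \<Rightarrow> bool" where
  "is_restriction c g = (case c of (r, f) \<Rightarrow> case g of (s, h) \<Rightarrow>
     (\<exists>\<sigma> :: nat \<Rightarrow> nat + bool.
        (\<forall>p < r. case \<sigma> p of Inl j \<Rightarrow> j < s | Inr _ \<Rightarrow> True) \<and>
        (\<forall>ys. length ys = s \<longrightarrow>
           h ys = f (map (\<lambda>p. case \<sigma> p of Inl j \<Rightarrow> ys ! j | Inr b \<Rightarrow> b) [0..<r]))))"

definition avoids :: "constr set \<Rightarrow> constr \<Rightarrow> bool" where
  "avoids F g = (\<not> (\<exists>c \<in> F. is_restriction c g))"

end

(* If a violates a constraint C of phi, shrink ones(a) restricted to the scope of C to an
   inclusion-minimal set T whose indicator still violates C. If |T| <= d, the indicator of T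
   lies in F_d, so phi_d contains NAND(T), which a violates. If |T| > d, fix the variables
   outside T to 0 and identify those of T with d + 1 new arguments via a surjection T -> [d+1]:
   by minimality the resulting restriction of C is false exactly when all new arguments are 1,
   i.e. it is NAND_{d+1}. Part (P2) is immediate: an a' <= a of weight at most d violating phi
   would be exactly a witness against d-robustness. *)
theory Submission
  imports Defs
begin

lemma finite_minimal_subset:
  assumes "finite A" and "P A"
  shows "\<exists>T \<subseteq> A. P T \<and> (\<forall>T' \<subset> T. \<not> P T')"
  using assms
proof (induction A rule: finite_psubset_induct)
  case (psubset A)
  show ?case
  proof (cases "\<exists>T' \<subset> A. P T'")
    case True
    then obtain T' where "T' \<subset> A" and "P T'" by blast
    with psubset.IH show ?thesis by (meson psubset_imp_subset subset_trans)
  next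
    case False
    with psubset.prems show ?thesis by blast
  qed
qed

lemma ex_surj_on_lessThan:
  assumes "finite T" and "0 < m" and "m \<le> card T"
  obtains g :: "'a \<Rightarrow> nat" where "g ` T = {..<m}"
proof -
  obtain h where h: "bij_betw h T {0..<card T}"
    using ex_bij_betw_finite_nat[OF assms(1)] by blast
  have "(\<lambda>i. min (h i) (m - 1)) ` T = {..<m}"
  proof
    show "(\<lambda>i. min (h i) (m - 1)) ` T \<subseteq> {..<m}"
      using assms(2) by auto
    show "{..<m} \<subseteq> (\<lambda>i. min (h i) (m - 1)) ` T"
    proof
      fix j assume "j \<in> {..<m}"
      with assms(3) have "j \<in> h ` T"
        using bij_betw_imp_surj_on[OF h] by auto
      then obtain i where "i \<in> T" and "h i = j" by blast
      with \<open>j \<in> {..<m}\<close> show "j \<in> (\<lambda>i. min (h i) (m - 1)) ` T" by force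
    qed
  qed
  then show thesis by (rule that)
qed

lemma is_restriction_of_variable_map:
  fixes \<tau> :: "nat \<Rightarrow> nat + bool"
  assumes "length idx = r"
    and "\<forall>i \<in> set idx. case \<tau> i of Inl j \<Rightarrow> j < s | Inr _ \<Rightarrow> True"
    and "\<forall>ys. length ys = s \<longrightarrow>
           h ys = f (map (\<lambda>i. case \<tau> i of Inl j \<Rightarrow> ys ! j | Inr b \<Rightarrow> b) idx)"
  shows "is_restriction (r, f) (s, h)"
  unfolding is_restriction_def prod.case
proof (intro exI[of _ "\<lambda>p. \<tau> (idx ! p)"] conjI allI impI)
  fix p assume "p < r"
  with assms(1,2) show "case \<tau> (idx ! p) of Inl j \<Rightarrow> j < s | Inr _ \<Rightarrow> True"
    by (simp add: nth_mem)
next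
  fix ys :: "bool list" assume "length ys = s"
  have "map (\<lambda>p. case \<tau> (idx ! p) of Inl j \<Rightarrow> ys ! j | Inr b \<Rightarrow> b) [0..<r]
      = map (\<lambda>i. case \<tau> i of Inl j \<Rightarrow> ys ! j | Inr b \<Rightarrow> b) (map ((!) idx) [0..<length idx])"
    using assms(1) by simp
  also have "\<dots> = map (\<lambda>i. case \<tau> i of Inl j \<Rightarrow> ys ! j | Inr b \<Rightarrow> b) idx"
    by (simp only: map_nth)
  finally show "h ys = f (map (\<lambda>p. case \<tau> (idx ! p) of Inl j \<Rightarrow> ys ! j | Inr b \<Rightarrow> b) [0..<r])"
    using assms(3) \<open>length ys = s\<close> by simp
qed

lemma is_restriction_NAND_of_minimal_violation:
  fixes T :: "nat set"
  assumes "length idx = r" and "finite T" and "0 < m" and "m \<le> card T"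
    and violated: "\<not> f (map (\<lambda>i. i \<in> T) idx)"
    and minimal: "\<And>T'. T' \<subset> T \<Longrightarrow> f (map (\<lambda>i. i \<in> T') idx)"
  shows "is_restriction (r, f) (NAND m)"
proof -
  obtain g :: "nat \<Rightarrow> nat" where g: "g ` T = {..<m}"
    using ex_surj_on_lessThan[OF assms(2-4)] .
  define \<tau> where "\<tau> i = (if i \<in> T then Inl (g i) else Inr False)" for i
  have restricted_is_NAND: "(\<not> (\<forall>y \<in> set ys. y)) = f (map (\<lambda>i. i \<in> {i \<in> T. ys ! g i}) idx)"
    if "length ys = m" for ys :: "bool list"
  proof (cases "\<forall>y \<in> set ys. y")
    case True
    with g that have "{i \<in> T. ys ! g i} = T" by (auto simp: all_set_conv_all_nth)
    with True violated show ?thesis by simp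
  next
    case False
    with that obtain j where "j < m" and "\<not> ys ! j" by (auto simp: in_set_conv_nth)
    with g obtain i where "i \<in> T" and "\<not> ys ! g i" by (metis imageE lessThan_iff)
    then have "{i \<in> T. ys ! g i} \<subset> T" by blast
    with False minimal show ?thesis by blast
  qed
  show ?thesis
    unfolding NAND_def
  proof (rule is_restriction_of_variable_map[where \<tau> = \<tau>])
    show "\<forall>i \<in> set idx. case \<tau> i of Inl j \<Rightarrow> j < m | Inr _ \<Rightarrow> True"
      using g by (auto simp: \<tau>_def)
    show "\<forall>ys. length ys = m \<longrightarrow> (\<not> (\<forall>y \<in> set ys. y))
            = f (map (\<lambda>i. case \<tau> i of Inl j \<Rightarrow> ys ! j | Inr b \<Rightarrow> b) idx)"
      using restricted_is_NAND by (auto simp: \<tau>_def intro!: arg_cong[where f = f])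
  qed fact
qed

lemma assignment_indicator: "T \<subseteq> {..<n} \<Longrightarrow> assignment n (\<lambda>i. i \<in> T)"
  unfolding assignment_def by auto

lemma ones_indicator: "T \<subseteq> {..<n} \<Longrightarrow> ones n (\<lambda>i. i \<in> T) = T"
  unfolding ones_def by auto

lemma mem_phi_d_if_indicator_violates:
  assumes "T \<subseteq> {..<n}" and "card T \<le> d" and "\<not> satisfies (\<lambda>i. i \<in> T) \<phi>"
  shows "T \<in> phi_d n d \<phi>"
proof -
  have "(\<lambda>i. i \<in> T) \<in> Fd n d \<phi>"
    using assms by (simp add: Fd_def weight_def assignment_indicator ones_indicator)
  then show ?thesis
    unfolding phi_d_def using ones_indicator[OF assms(1)] by (metis image_eqI)
qed

theorem satisfies_if_satisfies_phi_d:
  assumes wf: "wf_formula F n \<phi>" and avoids: "avoids F (NAND (d + 1))"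
    and nands: "satisfies_nands a (phi_d n d \<phi>)"
  shows "satisfies a \<phi>"
  unfolding satisfies_def
proof (rule ballI, rule ccontr)
  fix c assume "c \<in> set \<phi>" and "\<not> sat_constraint a c"
  then obtain r f idx where c: "c = ((r, f), idx)" and "\<not> f (map a idx)"
    by (auto simp: sat_constraint_def split: prod.splits)
  from wf \<open>c \<in> set \<phi>\<close> have "(r, f) \<in> F" and "length idx = r" and scope: "set idx \<subseteq> {..<n}"
    by (auto simp: wf_formula_def c)
  let ?A = "ones n a \<inter> set idx"
  have "map (\<lambda>i. i \<in> ?A) idx = map a idx"
    using scope by (auto simp: ones_def)
  with \<open>\<not> f (map a idx)\<close> obtain T where "T \<subseteq> ?A" and violated: "\<not> f (map (\<lambda>i. i \<in> T) idx)"
      and minimal: "\<forall>T' \<subset> T. f (map (\<lambda>i. i \<in> T') idx)"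
    using finite_minimal_subset[of ?A "\<lambda>T. \<not> f (map (\<lambda>i. i \<in> T) idx)"] by (metis finite_Int finite_set)
  have "T \<subseteq> {..<n}" and "finite T" and ones_a: "\<forall>i \<in> T. a i"
    using \<open>T \<subseteq> ?A\<close> scope finite_subset by (auto simp: ones_def)
  show False
  proof (cases "card T \<le> d")
    case True
    have "\<not> sat_constraint (\<lambda>i. i \<in> T) c"
      using violated by (simp add: sat_constraint_def c)
    with \<open>c \<in> set \<phi>\<close> have "\<not> satisfies (\<lambda>i. i \<in> T) \<phi>"
      by (auto simp: satisfies_def)
    then have "T \<in> phi_d n d \<phi>"
      using mem_phi_d_if_indicator_violates \<open>T \<subseteq> {..<n}\<close> True by blast
    with nands ones_a show False
      by (auto simp: satisfies_nands_def nand_sat_def)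
  next
    case False
    have "is_restriction (r, f) (NAND (d + 1))"
      by (rule is_restriction_NAND_of_minimal_violation[where T = T])
        (use \<open>length idx = r\<close> \<open>finite T\<close> False violated minimal in auto)
    with avoids \<open>(r, f) \<in> F\<close> show False by (auto simp: avoids_def)
  qed
qed

theorem satisfies_phi_d_if_robust:
  assumes "robust n d \<phi> a"
  shows "satisfies_nands a (phi_d n d \<phi>)"
  unfolding satisfies_nands_def phi_d_def
proof (rule ballI, rule ccontr)
  fix S assume "S \<in> ones n ` Fd n d \<phi>" and "\<not> nand_sat a S"
  then obtain b where b: "b \<in> Fd n d \<phi>" and "\<forall>i \<in> ones n b. a i"
    by (auto simp: nand_sat_def)
  moreover have "b i \<Longrightarrow> i < n" for i
    using b by (auto simp: Fd_def assignment_def not_le[symmetric])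
  ultimately have "le_assign b a"
    by (auto simp: le_assign_def ones_def)
  with assms b show False
    by (auto simp: robust_def Fd_def)
qed

theorem mainTheorem7:
  fixes F :: "constr set" and \<phi> :: formula and n d :: nat
  assumes "d \<ge> 2" and "finite F" and "wf_formula F n \<phi>"
  shows "(avoids F (NAND (d + 1)) \<longrightarrow>
            (\<forall>a. assignment n a \<and> satisfies_nands a (phi_d n d \<phi>) \<longrightarrow> satisfies a \<phi>))
       \<and> (\<forall>a. assignment n a \<and> robust n d \<phi> a \<longrightarrow> satisfies_nands a (phi_d n d \<phi>))"
  using satisfies_if_satisfies_phi_d[OF assms(3)] satisfies_phi_d_if_robust by blast

end
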